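(* (a) Let $x\in P$ and $(y,v')\in\mathcal{P}$ with $x\neq y$ and $v'\in x'^{\perp}$ in $S'$. Then $|\{x,(y,v')\}^{\perp}|\geq 3$ in $\mathbb{S}$. (b) Let $u'\in P'$ and $(y,v')\in\mathcal{P}$ with $u'\neq v'$ and $y\in u^{\perp}$ in $S$. Then $|\{u',(y,v')\}^{\perp}|\geq 3$ in $\mathbb{S}$.
   Context: Let $S=(P,L)$ and $S'=(P',L')$ be generalized quadrangles of order $(2,2)$ (every line has 3 points, every point lies on 3 lines, and for each point $x$ and line $l\not\ni x$ exactly one point of $l$ is collinear with $x$), with an isomorphism $x\mapsto x'$ from $S$ to $S'$ (write $u$ for the preimage of $u'\in P'$). In a point-line geometry, $x^{\perp}$ is $x$ together with all points collinear with $x$, and $A^{\perp}=\bigcap_{a\in A}a^{\perp}$. A triad is a set of three pairwise non-collinear points, complete if $|T^{\perp}|=3$. Let $\mathcal{P}=\{(x,y')\in P\times P':y'\in x'^{\perp}\}$ and $\mathcal{L}$ the set of all $3$-subsets $\{(x,u'),(y,v'),(z,w')\}$ of $\mathcal{P}$ where $T=\{x,y,z\}$ (three distinct points) is a line or complete triad of $S$ and $\{u',v',w'\}=T'^{\perp}$ in $S'$ with $u',v',w'$ distinct. The geometry $\mathbb{S}=(\mathbb{P},\mathbb{L})$ has point set $\mathbb{P}=\mathcal{P}\cup P\cup P'$ (disjoint union) and line set $\mathcal{L}\cup\{\{x,(x,u'),u'\}:(x,u')\in\mathcal{P}\}$. *)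

theory Defs
  imports Main
begin

definition collinear :: "'p set \<Rightarrow> 'p set set \<Rightarrow> 'p \<Rightarrow> 'p \<Rightarrow> bool" where
  "collinear Pts Lns x y \<longleftrightarrow> (\<exists>l\<in>Lns. x \<in> l \<and> y \<in> l)"

definition perp :: "'p set \<Rightarrow> 'p set set \<Rightarrow> 'p \<Rightarrow> 'p set" where
  "perp Pts Lns x = {y \<in> Pts. y = x \<or> collinear Pts Lns x y}"

definition perpset :: "'p set \<Rightarrow> 'p set set \<Rightarrow> 'p set \<Rightarrow> 'p set" where
  "perpset Pts Lns A = {y \<in> Pts. \<forall>a\<in>A. y \<in> perp Pts Lns a}"

definition GQ22 :: "'p set \<Rightarrow> 'p set set \<Rightarrow> bool" where
  "GQ22 Pts Lns \<longleftrightarrow>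
     (\<forall>l\<in>Lns. l \<subseteq> Pts \<and> card l = 3) \<and>
     (\<forall>x\<in>Pts. card {l\<in>Lns. x \<in> l} = 3) \<and>
     (\<forall>x\<in>Pts. \<forall>l\<in>Lns. x \<notin> l \<longrightarrow> (\<exists>!y. y \<in> l \<and> collinear Pts Lns x y))"

definition geom_iso :: "('p \<Rightarrow> 'q) \<Rightarrow> 'p set \<Rightarrow> 'p set set \<Rightarrow> 'q set \<Rightarrow> 'q set set \<Rightarrow> bool" where
  "geom_iso f P L P' L' \<longleftrightarrow> bij_betw f P P' \<and> (\<lambda>l. f ` l) ` L = L'"

definition triad :: "'p set \<Rightarrow> 'p set set \<Rightarrow> 'p set \<Rightarrow> bool" where
  "triad Pts Lns T \<longleftrightarrow> T \<subseteq> Pts \<and> card T = 3 \<and>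
     (\<forall>x\<in>T. \<forall>y\<in>T. x \<noteq> y \<longrightarrow> \<not> collinear Pts Lns x y)"

definition complete_triad :: "'p set \<Rightarrow> 'p set set \<Rightarrow> 'p set \<Rightarrow> bool" where
  "complete_triad Pts Lns T \<longleftrightarrow> triad Pts Lns T \<and> card (perpset Pts Lns T) = 3"

definition calP :: "'a set \<Rightarrow> 'b set \<Rightarrow> 'b set set \<Rightarrow> ('a \<Rightarrow> 'b) \<Rightarrow> ('a \<times> 'b) set" where
  "calP P P' L' f = {(x, y). x \<in> P \<and> y \<in> perp P' L' (f x)}"

definition calL :: "'a set \<Rightarrow> 'a set set \<Rightarrow> 'b set \<Rightarrow> 'b set set \<Rightarrow> ('a \<Rightarrow> 'b) \<Rightarrow> ('a \<times> 'b) set set" where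
  "calL P L P' L' f = {B. B \<subseteq> calP P P' L' f \<and> card B = 3 \<and> card (fst ` B) = 3 \<and>
      card (snd ` B) = 3 \<and>
      (fst ` B \<in> L \<or> complete_triad P L (fst ` B)) \<and>
      snd ` B = perpset P' L' (f ` fst ` B)}"

datatype ('a, 'b) bpt = BP 'a | BM 'a 'b | BQ 'b

definition bigP :: "'a set \<Rightarrow> 'a set set \<Rightarrow> 'b set \<Rightarrow> 'b set set \<Rightarrow> ('a \<Rightarrow> 'b) \<Rightarrow> ('a, 'b) bpt set" where
  "bigP P L P' L' f = (\<lambda>(x, y). BM x y) ` calP P P' L' f \<union> BP ` P \<union> BQ ` P'"

definition bigL :: "'a set \<Rightarrow> 'a set set \<Rightarrow> 'b set \<Rightarrow> 'b set set \<Rightarrow> ('a \<Rightarrow> 'b) \<Rightarrow> ('a, 'b) bpt set set" where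
  "bigL P L P' L' f = (\<lambda>B. (\<lambda>(x, y). BM x y) ` B) ` calL P L P' L' f \<union>
     {{BP x, BM x u, BQ u} | x u. (x, u) \<in> calP P P' L' f}"

end

theory Submission
  imports Defs
begin

(*
  In a generalized quadrangle of order (2,2) every pair of distinct points a, b is regular:
  {a,b}\<^sup>\<bottom> and {a,b}\<^sup>\<bottom>\<^sup>\<bottom> are both lines or complete triads, each the perp of the other.
  A line or complete triad T = {a,b,c} of S with T'\<^sup>\<bottom> = {p',q',r'} gives the line
  {(a,p'),(b,q'),(c,r')} of \<bbbS>, for every matching of T with T'\<^sup>\<bottom>.

  (a) T = {x,y}\<^sup>\<bottom>\<^sup>\<bottom> contains x and y, and T'\<^sup>\<bottom> = {x',y'}\<^sup>\<bottom> = {v',w',w''}; so (x,w') and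
  (x,w'') lie on lines of \<bbbS> through (y,v'), and on lines through x.  With v' this gives three
  points of {x,(y,v')}\<^sup>\<bottom>.
  (b) T = {u,v}\<^sup>\<bottom> = {y,z,z'} and T'\<^sup>\<bottom> = ({u,v}\<^sup>\<bottom>\<^sup>\<bottom>)' contains u' and v'; so (z,u') and (z',u')
  lie on lines of \<bbbS> through (y,v'), and on lines through u'.  With y this gives three points
  of {u',(y,v')}\<^sup>\<bottom>.
*)

lemma card_3_obtain_others:
  assumes "card S = 3" "a \<in> S"
  obtains b c where "S = {a, b, c}" "a \<noteq> b" "a \<noteq> c" "b \<noteq> c"
  using assms unfolding card_3_iff by auto

lemma card_3_obtain_third:
  assumes "card S = 3" "a \<in> S" "b \<in> S" "a \<noteq> b"
  obtains c where "S = {a, b, c}" "c \<noteq> a" "c \<noteq> b"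
  using assms unfolding card_3_iff by auto

section \<open>Perps in point-line geometries\<close>

lemma collinear_commute: "collinear Pts Lns x y \<longleftrightarrow> collinear Pts Lns y x"
  unfolding collinear_def by auto

lemma collinear_sym: "collinear Pts Lns x y \<Longrightarrow> collinear Pts Lns y x"
  unfolding collinear_def by blast

lemma collinearI: "l \<in> Lns \<Longrightarrow> x \<in> l \<Longrightarrow> y \<in> l \<Longrightarrow> collinear Pts Lns x y"
  unfolding collinear_def by auto

lemma perp_iff: "y \<in> perp Pts Lns x \<longleftrightarrow> y \<in> Pts \<and> (y = x \<or> collinear Pts Lns x y)"
  unfolding perp_def by auto

lemma perp_commute: "y \<in> perp Pts Lns x \<Longrightarrow> x \<in> Pts \<Longrightarrow> x \<in> perp Pts Lns y"
  unfolding perp_iff by (auto simp: collinear_commute)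

lemma perpset_iff:
  "y \<in> perpset Pts Lns A \<longleftrightarrow> y \<in> Pts \<and> (\<forall>a\<in>A. y = a \<or> collinear Pts Lns a y)"
  unfolding perpset_def perp_def by auto

lemma perpset_subset: "perpset Pts Lns A \<subseteq> Pts"
  unfolding perpset_def by auto

lemma perpset_antimono: "A \<subseteq> B \<Longrightarrow> perpset Pts Lns B \<subseteq> perpset Pts Lns A"
  unfolding perpset_def by blast

lemma subset_perpset_perpset:
  assumes "A \<subseteq> Pts"
  shows "A \<subseteq> perpset Pts Lns (perpset Pts Lns A)"
proof
  fix x assume x: "x \<in> A"
  have "x \<in> perp Pts Lns a" if "a \<in> perpset Pts Lns A" for a
  proof (rule perp_commute)
    show "a \<in> perp Pts Lns x"
      using that x unfolding perpset_def by blast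
    show "x \<in> Pts"
      using x assms by blast
  qed
  then show "x \<in> perpset Pts Lns (perpset Pts Lns A)"
    using x assms unfolding perpset_def[of _ _ "perpset Pts Lns A"] by blast
qed

lemma perpset_perpset_perpset:
  "A \<subseteq> Pts \<Longrightarrow> perpset Pts Lns (perpset Pts Lns (perpset Pts Lns A)) = perpset Pts Lns A"
  by (meson antisym perpset_antimono perpset_subset subset_perpset_perpset)

lemma in_perpset_pairI:
  assumes "\<forall>l\<in>Lns. l \<subseteq> Pts" "collinear Pts Lns X Z" "collinear Pts Lns Y Z"
  shows "Z \<in> perpset Pts Lns {X, Y}"
  using assms unfolding perpset_iff collinear_def by blast

lemma card_le_card_perpset_pair:
  assumes "finite Pts" "\<forall>l\<in>Lns. l \<subseteq> Pts"
    and "\<forall>Z\<in>Zs. collinear Pts Lns X Z \<and> collinear Pts Lns Y Z"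
  shows "card Zs \<le> card (perpset Pts Lns {X, Y})"
proof (rule card_mono)
  show "finite (perpset Pts Lns {X, Y})"
    using assms(1) perpset_subset by (rule finite_subset[rotated])
  show "Zs \<subseteq> perpset Pts Lns {X, Y}"
  proof
    fix Z assume "Z \<in> Zs"
    then show "Z \<in> perpset Pts Lns {X, Y}"
      using assms(3) by (intro in_perpset_pairI[OF assms(2)]) auto
  qed
qed

lemma collinear_image_iff:
  assumes iso: "geom_iso f P L P' L'" and sub: "\<forall>l\<in>L. l \<subseteq> P" and a: "a \<in> P" and b: "b \<in> P"
  shows "collinear P' L' (f a) (f b) \<longleftrightarrow> collinear P L a b"
proof
  have inj: "inj_on f P" and lines: "L' = (\<lambda>l. f ` l) ` L"
    using iso unfolding geom_iso_def bij_betw_def by auto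
  assume "collinear P' L' (f a) (f b)"
  then obtain l where l: "l \<in> L" "f a \<in> f ` l" "f b \<in> f ` l"
    using lines unfolding collinear_def by blast
  moreover have "l \<subseteq> P"
    using sub l(1) by blast
  ultimately have "a \<in> l" "b \<in> l"
    using inj_on_image_mem_iff[OF inj a] inj_on_image_mem_iff[OF inj b] by blast+
  then show "collinear P L a b"
    by (rule collinearI[OF l(1)])
next
  assume "collinear P L a b"
  then obtain l where l: "l \<in> L" "a \<in> l" "b \<in> l"
    unfolding collinear_def by blast
  moreover have "f ` l \<in> L'"
    using iso l(1) unfolding geom_iso_def by blast
  ultimately show "collinear P' L' (f a) (f b)"
    using collinearI imageI by metis
qed

lemma perp_image_iff:
  assumes iso: "geom_iso f P L P' L'" and sub: "\<forall>l\<in>L. l \<subseteq> P" and a: "a \<in> P" and b: "b \<in> P"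
  shows "f b \<in> perp P' L' (f a) \<longleftrightarrow> b \<in> perp P L a"
proof -
  have inj: "inj_on f P" and image: "f ` P = P'"
    using iso unfolding geom_iso_def bij_betw_def by auto
  have "f b \<in> P'"
    using b image by blast
  moreover have "f b = f a \<longleftrightarrow> b = a"
    using inj_on_eq_iff[OF inj b a] .
  ultimately show ?thesis
    unfolding perp_iff using collinear_image_iff[OF iso sub a b] b by simp
qed

lemma perpset_image:
  assumes iso: "geom_iso f P L P' L'" and sub: "\<forall>l\<in>L. l \<subseteq> P" and A: "A \<subseteq> P"
  shows "perpset P' L' (f ` A) = f ` perpset P L A"
proof -
  have image: "f ` P = P'"
    using iso unfolding geom_iso_def bij_betw_def by auto
  have iff: "f y \<in> perpset P' L' (f ` A) \<longleftrightarrow> y \<in> perpset P L A" if y: "y \<in> P" for y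
    using perp_image_iff[OF iso sub _ y] A y image unfolding perpset_def by blast
  show ?thesis
  proof
    show "perpset P' L' (f ` A) \<subseteq> f ` perpset P L A"
      using iff image perpset_subset[of P' L'] by blast
    show "f ` perpset P L A \<subseteq> perpset P' L' (f ` A)"
      using iff perpset_subset[of P L] by blast
  qed
qed

section \<open>Generalized quadrangles of order (2,2)\<close>

definition line_or_complete_triad :: "'p set \<Rightarrow> 'p set set \<Rightarrow> 'p set \<Rightarrow> bool" where
  "line_or_complete_triad Pts Lns T \<longleftrightarrow> T \<in> Lns \<or> complete_triad Pts Lns T"

locale gq22 =
  fixes P :: "'p set" and L :: "'p set set"
  assumes gq22: "GQ22 P L"
begin

abbreviation col :: "'p \<Rightarrow> 'p \<Rightarrow> bool" where
  "col \<equiv> collinear P L"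

lemma line_subset: "l \<in> L \<Longrightarrow> l \<subseteq> P"
  using gq22 unfolding GQ22_def by blast

lemma card_line: "l \<in> L \<Longrightarrow> card l = 3"
  using gq22 unfolding GQ22_def by blast

lemma finite_line: "l \<in> L \<Longrightarrow> finite l"
  by (rule card_ge_0_finite) (simp add: card_line)

lemma card_lines_through: "x \<in> P \<Longrightarrow> card {l \<in> L. x \<in> l} = 3"
  using gq22 unfolding GQ22_def by blast

lemma finite_lines_through: "x \<in> P \<Longrightarrow> finite {l \<in> L. x \<in> l}"
  by (rule card_ge_0_finite) (simp add: card_lines_through)

lemma ex1_collinear_on_line: "x \<in> P \<Longrightarrow> l \<in> L \<Longrightarrow> x \<notin> l \<Longrightarrow> \<exists>!y. y \<in> l \<and> col x y"
  using gq22[unfolded GQ22_def, THEN conjunct2, THEN conjunct2, rule_format] .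

lemma in_line_if_collinear_two:
  assumes "x \<in> P" "l \<in> L" "y \<in> l" "z \<in> l" "y \<noteq> z" "col x y" "col x z"
  shows "x \<in> l"
  using ex1_collinear_on_line[of x l] assms by blast

lemma collinear_refl:
  assumes "x \<in> P"
  shows "col x x"
proof -
  have "{l \<in> L. x \<in> l} \<noteq> {}"
    using card_lines_through[OF assms] by (intro notI) simp
  then show ?thesis
    unfolding collinear_def by blast
qed

lemma lines_meet_once:
  assumes "l \<in> L" "m \<in> L" "x \<in> l" "x \<in> m" "y \<in> l" "y \<in> m" "x \<noteq> y"
  shows "l = m"
proof (rule ccontr)
  assume "l \<noteq> m"
  moreover have "finite l" "card m = card l"
    using assms(1,2) finite_line card_line by simp_all
  ultimately obtain z where z: "z \<in> m" "z \<notin> l"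
    using card_subset_eq by blast
  have "z \<in> l"
    using in_line_if_collinear_two[of z l x y] line_subset[OF assms(2)] collinearI[of m L] assms z
    by blast
  with z show False by simp
qed

definition join :: "'p \<Rightarrow> 'p \<Rightarrow> 'p set" where
  "join x y = (SOME l. l \<in> L \<and> x \<in> l \<and> y \<in> l)"

lemma join: "col x y \<Longrightarrow> join x y \<in> L \<and> x \<in> join x y \<and> y \<in> join x y"
  unfolding join_def collinear_def by (rule someI_ex) blast

lemma inj_on_join:
  assumes "pairwise (\<lambda>y z. \<not> col y z) Y" "\<forall>y\<in>Y. col x y"
  shows "inj_on (join x) Y"
proof
  fix y z assume "y \<in> Y" "z \<in> Y" "join x y = join x z"
  then have "col y z"
    using join assms(2) collinearI by metis
  then show "y = z"
    using assms(1) \<open>y \<in> Y\<close> \<open>z \<in> Y\<close> unfolding pairwise_def by blast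
qed

lemma card_pairwise_noncollinear_neighbours:
  assumes "x \<in> P" "pairwise (\<lambda>y z. \<not> col y z) Y" "\<forall>y\<in>Y. col x y"
  shows "card Y \<le> 3"
proof -
  have "join x ` Y \<subseteq> {l \<in> L. x \<in> l}"
    using join assms(3) by blast
  with inj_on_join[OF assms(2,3)] have "card Y \<le> card {l \<in> L. x \<in> l}"
    using card_inj_on_le finite_lines_through[OF assms(1)] by blast
  then show ?thesis
    using card_lines_through[OF assms(1)] by simp
qed

lemma collinear_perpset_pair:
  assumes a: "a \<in> P" and b: "b \<in> P" and ab: "\<not> col a b" and p: "p \<in> perpset P L {a, b}"
  shows "col a p" "col b p"
proof -
  have "p = a \<or> col a p" "p = b \<or> col b p"
    using p unfolding perpset_iff by blast+
  moreover have "\<not> col b a" "a \<noteq> b"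
    using ab collinear_commute collinear_refl[OF a] by metis+
  ultimately show "col a p" "col b p"
    using collinear_refl[OF a] collinear_refl[OF b] by blast+
qed

lemma perpset_pair_pairwise_noncollinear:
  assumes a: "a \<in> P" and b: "b \<in> P" and ab: "\<not> col a b"
  shows "pairwise (\<lambda>p q. \<not> col p q) (perpset P L {a, b})"
proof (rule pairwiseI, rule notI)
  fix p q assume p: "p \<in> perpset P L {a, b}" and q: "q \<in> perpset P L {a, b}"
    and "p \<noteq> q" "col p q"
  then obtain l where l: "l \<in> L" "p \<in> l" "q \<in> l"
    unfolding collinear_def by blast
  have "a \<in> l" "b \<in> l"
    using in_line_if_collinear_two[OF a l \<open>p \<noteq> q\<close>] in_line_if_collinear_two[OF b l \<open>p \<noteq> q\<close>]
      collinear_perpset_pair[OF a b ab p] collinear_perpset_pair[OF a b ab q] by blast+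
  then show False
    using ab collinearI[OF l(1), where Pts = P] by blast
qed

lemma card_perpset_pair_noncollinear:
  assumes a: "a \<in> P" and b: "b \<in> P" and ab: "\<not> col a b"
  shows "card (perpset P L {a, b}) = 3"
proof -
  have col_a: "\<forall>p\<in>perpset P L {a, b}. col a p"
    using collinear_perpset_pair[OF a b ab] by blast
  have "bij_betw (join a) (perpset P L {a, b}) {l \<in> L. a \<in> l}"
    unfolding bij_betw_def
  proof (intro conjI equalityI subsetI)
    show "inj_on (join a) (perpset P L {a, b})"
      by (rule inj_on_join[OF perpset_pair_pairwise_noncollinear[OF a b ab] col_a])
  next
    fix l assume "l \<in> join a ` perpset P L {a, b}"
    then obtain p where "p \<in> perpset P L {a, b}" "l = join a p"
      by blast
    then show "l \<in> {l \<in> L. a \<in> l}"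
      using join[OF col_a[rule_format]] by blast
  next
    fix l assume l: "l \<in> {l \<in> L. a \<in> l}"
    then have "b \<notin> l"
      using ab collinearI[of l L a b P] by blast
    then obtain p where p: "p \<in> l" "col b p"
      using ex1_collinear_on_line[OF b] l by blast
    have "a \<noteq> p"
      using p(2) ab collinear_commute[of P L a b] by blast
    have p_perp: "p \<in> perpset P L {a, b}"
      using p l line_subset collinearI[of l L a p P] unfolding perpset_iff by blast
    then have "join a p = l"
      using lines_meet_once[of "join a p" l a p] join[OF col_a[rule_format, OF p_perp]] l p(1) \<open>a \<noteq> p\<close>
      by blast
    then show "l \<in> join a ` perpset P L {a, b}"
      using p_perp by blast
  qed
  then show ?thesis
    using card_lines_through[OF a] by (simp add: bij_betw_same_card)
qed

lemma triad_perpset_pair: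
  assumes "a \<in> P" "b \<in> P" "\<not> col a b"
  shows "triad P L (perpset P L {a, b})"
  using perpset_subset[of P L] card_perpset_pair_noncollinear[OF assms]
    perpset_pair_pairwise_noncollinear[OF assms, unfolded pairwise_def]
  unfolding triad_def by blast

lemma perpset_pair_on_line:
  assumes l: "l \<in> L" and "a \<in> l" "b \<in> l" "a \<noteq> b"
  shows "perpset P L {a, b} = l"
proof
  show "perpset P L {a, b} \<subseteq> l"
  proof
    fix p assume "p \<in> perpset P L {a, b}"
    then have "p \<in> P" "p = a \<or> col a p" "p = b \<or> col b p"
      unfolding perpset_iff by blast+
    then show "p \<in> l"
      using in_line_if_collinear_two[OF _ l assms(2-4), of p] assms(2,3)
        collinear_commute[of P L a p] collinear_commute[of P L b p] by blast
  qed
  show "l \<subseteq> perpset P L {a, b}"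
  proof
    fix x assume "x \<in> l"
    then show "x \<in> perpset P L {a, b}"
      using line_subset[OF l] collinearI[OF l, where Pts = P] assms(2,3) unfolding perpset_iff by blast
  qed
qed

lemma perpset_line:
  assumes l: "l \<in> L"
  shows "perpset P L l = l"
proof
  obtain a b c where "l = {a, b, c}" "a \<noteq> b"
    using card_line[OF l] unfolding card_3_iff by blast
  then show "perpset P L l \<subseteq> l"
    using perpset_antimono[of "{a, b}" l P L] perpset_pair_on_line[OF l, of a b] by blast
  show "l \<subseteq> perpset P L l"
  proof
    fix x assume "x \<in> l"
    then show "x \<in> perpset P L l"
      using line_subset[OF l] collinearI[OF l, where Pts = P] unfolding perpset_iff by blast
  qed
qed

lemma collinear_on_line_if_collinear_two:
  assumes "x \<in> P" "l \<in> L" "y \<in> l" "z \<in> l" "y \<noteq> z" "col x y" "col x z" "w \<in> l"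
  shows "col x w"
  using in_line_if_collinear_two[OF assms(1-7)] collinearI[OF assms(2) _ assms(8), where Pts = P]
  by blast

text \<open>If c were not collinear with a3, then a3 would be collinear with a, b and with the points
  p \<in> a1c and q \<in> a2c collinear with it. These four points are pairwise non-collinear, but only
  three lines pass through a3.\<close>

lemma collinear_perpset_pair_third:
  assumes a: "a \<in> P" and b: "b \<in> P" and ab: "\<not> col a b"
    and H: "perpset P L {a, b} = {a1, a2, a3}" "a1 \<noteq> a2" "a1 \<noteq> a3" "a2 \<noteq> a3"
    and c: "c \<in> perpset P L {a1, a2}" "c \<noteq> a" "c \<noteq> b"
  shows "col a3 c"
proof (rule ccontr)
  assume a3c: "\<not> col a3 c"
  have a_i: "a1 \<in> perpset P L {a, b}" "a2 \<in> perpset P L {a, b}" "a3 \<in> perpset P L {a, b}"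
    using H(1) by blast+
  then have a_iP: "a1 \<in> P" "a2 \<in> P" "a3 \<in> P"
    using perpset_subset[of P L] by blast+
  have nc: "\<not> col a1 a2" "\<not> col a1 a3" "\<not> col a2 a3"
    using perpset_pair_pairwise_noncollinear[OF a b ab, unfolded pairwise_def] a_i H(2-4) by blast+
  note col_a = collinear_perpset_pair(1)[OF a b ab a_i(1)] collinear_perpset_pair(1)[OF a b ab a_i(2)]
    collinear_perpset_pair(1)[OF a b ab a_i(3)]
  note col_b = collinear_perpset_pair(2)[OF a b ab a_i(1)] collinear_perpset_pair(2)[OF a b ab a_i(2)]
    collinear_perpset_pair(2)[OF a b ab a_i(3)]
  have "a \<in> perpset P L {a1, a2}" "b \<in> perpset P L {a1, a2}"
    using a b col_a(1,2) col_b(1,2) unfolding perpset_iff by (blast intro: collinear_sym)+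
  then have ab_c: "\<not> col a c" "\<not> col b c"
    using pairwiseD[OF perpset_pair_pairwise_noncollinear[OF a_iP(1,2) nc(1)] _ c(1)] c(2,3) by auto
  obtain L1 where L1: "L1 \<in> L" "a1 \<in> L1" "c \<in> L1"
    using collinear_perpset_pair(1)[OF a_iP(1,2) nc(1) c(1)] unfolding collinear_def by blast
  obtain L2 where L2: "L2 \<in> L" "a2 \<in> L2" "c \<in> L2"
    using collinear_perpset_pair(2)[OF a_iP(1,2) nc(1) c(1)] unfolding collinear_def by blast
  have "a3 \<notin> L1" "a3 \<notin> L2"
    using a3c collinearI[OF L1(1) _ L1(3), of a3 P] collinearI[OF L2(1) _ L2(3), of a3 P] by blast+
  then obtain p q where p: "p \<in> L1" "col a3 p" and q: "q \<in> L2" "col a3 q"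
    using ex1_collinear_on_line[OF a_iP(3) L1(1)] ex1_collinear_on_line[OF a_iP(3) L2(1)] by blast
  have "a1 \<noteq> p" "a2 \<noteq> q"
    using p(2) q(2) nc(2,3) collinear_sym[of P L a3] by blast+
  have "p \<noteq> c" "q \<noteq> c"
    using p(2) q(2) a3c by blast+
  have far: "\<not> col e p \<and> \<not> col e q" if e: "e \<in> P" "col e a1" "col e a2" "\<not> col e c" for e
    using collinear_on_line_if_collinear_two[OF e(1) L1(1,2) p(1) \<open>a1 \<noteq> p\<close> e(2) _ L1(3)]
      collinear_on_line_if_collinear_two[OF e(1) L2(1,2) q(1) \<open>a2 \<noteq> q\<close> e(3) _ L2(3)] e(4)
    by blast
  note far_a = far[OF a col_a(1,2) ab_c(1)] and far_b = far[OF b col_b(1,2) ab_c(2)]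
  have "L1 \<noteq> L2"
    using nc(1) collinearI[OF L1(1) L1(2), of a2 P] L2(2) by blast
  have pq: "\<not> col p q"
  proof
    assume "col p q"
    have "q \<in> P"
      using q(1) L2(1) line_subset by blast
    then have "q \<in> L1"
      using in_line_if_collinear_two[OF _ L1(1) p(1) L1(3) \<open>p \<noteq> c\<close>] collinear_sym[OF \<open>col p q\<close>]
        collinearI[OF L2(1) q(1) L2(3), where Pts = P] by blast
    then show False
      using lines_meet_once[OF L1(1) L2(1) _ q(1) L1(3) L2(3) \<open>q \<noteq> c\<close>] \<open>L1 \<noteq> L2\<close> by blast
  qed
  let ?Y = "{a, b, p, q}"
  have "pairwise (\<lambda>y z. \<not> col y z) ?Y"
    using ab pq far_a far_b unfolding pairwise_def by (blast dest: collinear_sym)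
  moreover have "\<forall>y\<in>?Y. col a3 y"
    using col_a(3) col_b(3) p(2) q(2) by (blast intro: collinear_sym)
  ultimately have "card ?Y \<le> 3"
    by (rule card_pairwise_noncollinear_neighbours[OF a_iP(3)])
  moreover have "p \<in> P" "q \<in> P"
    using p(1) q(1) L1(1) L2(1) line_subset by blast+
  then have "a \<noteq> b" "a \<noteq> p" "a \<noteq> q" "b \<noteq> p" "b \<noteq> q" "p \<noteq> q"
    using ab pq far_a far_b collinear_refl a b by metis+
  then have "card ?Y = 4"
    by simp
  ultimately show False
    by simp
qed

lemma perpset_perpset_pair_noncollinear:
  assumes a: "a \<in> P" and b: "b \<in> P" and ab: "\<not> col a b"
    and H: "perpset P L {a, b} = {a1, a2, a3}" "a1 \<noteq> a2" "a1 \<noteq> a3" "a2 \<noteq> a3"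
  shows "perpset P L {a1, a2, a3} = perpset P L {a1, a2}"
proof
  show "perpset P L {a1, a2, a3} \<subseteq> perpset P L {a1, a2}"
    by (rule perpset_antimono) blast
  show "perpset P L {a1, a2} \<subseteq> perpset P L {a1, a2, a3}"
  proof
    fix c assume c: "c \<in> perpset P L {a1, a2}"
    have "a3 \<in> perp P L a" "a3 \<in> perp P L b"
      using H(1) unfolding perpset_def by blast+
    then have "c \<in> perp P L a3"
      using collinear_perpset_pair_third[OF a b ab H c] perp_commute[of a3 P L] a b c perpset_subset[of P L]
      unfolding perp_iff by blast
    then show "c \<in> perpset P L {a1, a2, a3}"
      using c unfolding perpset_def by blast
  qed
qed

lemma perpset_pair_line_or_complete_triad:
  assumes a: "a \<in> P" and b: "b \<in> P" and "a \<noteq> b"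
  shows "line_or_complete_triad P L (perpset P L {a, b}) \<and>
    line_or_complete_triad P L (perpset P L (perpset P L {a, b}))"
proof (cases "col a b")
  case True
  then obtain l where "l \<in> L" "a \<in> l" "b \<in> l"
    unfolding collinear_def by blast
  then show ?thesis
    using perpset_pair_on_line perpset_line \<open>a \<noteq> b\<close> unfolding line_or_complete_triad_def by simp
next
  case False
  define H where "H = perpset P L {a, b}"
  have triad_H: "triad P L H"
    unfolding H_def by (rule triad_perpset_pair[OF a b False])
  then obtain a1 a2 a3 where a_i: "H = {a1, a2, a3}" "a1 \<noteq> a2" "a1 \<noteq> a3" "a2 \<noteq> a3"
    unfolding triad_def card_3_iff by blast
  then have "a1 \<in> P" "a2 \<in> P" "\<not> col a1 a2"
    using triad_H unfolding triad_def by blast+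
  moreover have "perpset P L H = perpset P L {a1, a2}"
    using perpset_perpset_pair_noncollinear[OF a b False a_i[unfolded H_def]] a_i(1) by simp
  ultimately have triad_perp_H: "triad P L (perpset P L H)"
    using triad_perpset_pair by simp
  have "card (perpset P L (perpset P L H)) = 3"
    using perpset_perpset_perpset[of "{a, b}" P L] a b triad_H unfolding H_def triad_def by simp
  then have "complete_triad P L H" "complete_triad P L (perpset P L H)"
    using triad_H triad_perp_H unfolding complete_triad_def triad_def by blast+
  then show ?thesis
    unfolding line_or_complete_triad_def H_def by blast
qed

lemma line_or_complete_triadD:
  assumes "line_or_complete_triad P L T"
  shows "T \<subseteq> P" "card T = 3" "card (perpset P L T) = 3"
  using assms line_subset card_line perpset_line
  unfolding line_or_complete_triad_def complete_triad_def triad_def by auto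

lemma finite_perp:
  assumes "x \<in> P"
  shows "finite (perp P L x)"
proof (rule finite_subset)
  show "perp P L x \<subseteq> insert x (\<Union>{l \<in> L. x \<in> l})"
    unfolding perp_def collinear_def by blast
  show "finite (insert x (\<Union>{l \<in> L. x \<in> l}))"
    using finite_lines_through[OF assms] finite_line by blast
qed

lemma finite_points: "finite P"
proof (cases "P = {}")
  case False
  then obtain x where x: "x \<in> P"
    by blast
  have "P \<subseteq> (\<Union>y\<in>perp P L x. perp P L y)"
  proof
    fix z assume z: "z \<in> P"
    then obtain l where l: "l \<in> L" "z \<in> l"
      using collinear_refl unfolding collinear_def by blast
    have "\<exists>y\<in>l. y \<in> perp P L x"
    proof (cases "x \<in> l")
      case True
      then show ?thesis
        using x unfolding perp_iff by blast
    next
      case False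
      then obtain y where "y \<in> l" "col x y"
        using ex1_collinear_on_line[OF x l(1)] by blast
      then show ?thesis
        using line_subset[OF l(1)] unfolding perp_iff by blast
    qed
    then obtain y where "y \<in> l" "y \<in> perp P L x"
      by blast
    moreover have "z \<in> perp P L y"
      using z l collinearI[OF l(1) \<open>y \<in> l\<close> l(2), where Pts = P] unfolding perp_iff by blast
    ultimately show "z \<in> (\<Union>y\<in>perp P L x. perp P L y)"
      by blast
  qed
  moreover have "finite (\<Union>y\<in>perp P L x. perp P L y)"
    using finite_perp[OF x] finite_perp perp_iff[of _ P L x] by blast
  ultimately show ?thesis
    by (rule finite_subset)
qed simp

end

section \<open>The geometry \<bbbS>\<close>

lemma bigL_subset_bigP: "B \<in> bigL P L P' L' f \<Longrightarrow> B \<subseteq> bigP P L P' L' f"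
  unfolding bigL_def bigP_def calL_def calP_def perp_def by blast

lemma short_line_collinear:
  assumes "(x, u) \<in> calP P P' L' f"
  shows "collinear (bigP P L P' L' f) (bigL P L P' L' f) (BP x) (BM x u)"
    and "collinear (bigP P L P' L' f) (bigL P L P' L' f) (BP x) (BQ u)"
    and "collinear (bigP P L P' L' f) (bigL P L P' L' f) (BM x u) (BQ u)"
proof -
  have "{BP x, BM x u, BQ u} \<in> bigL P L P' L' f"
    using assms unfolding bigL_def by blast
  then show "collinear (bigP P L P' L' f) (bigL P L P' L' f) (BP x) (BM x u)"
    and "collinear (bigP P L P' L' f) (bigL P L P' L' f) (BP x) (BQ u)"
    and "collinear (bigP P L P' L' f) (bigL P L P' L' f) (BM x u) (BQ u)"
    by (rule collinearI; simp)+
qed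

lemma bigL_collinear_BM_BM:
  assumes T: "T \<subseteq> P" "card T = 3" "line_or_complete_triad P L T"
    and T': "card (perpset P' L' (f ` T)) = 3"
    and ab: "a \<in> T" "b \<in> T" "a \<noteq> b"
    and pq: "p \<in> perpset P' L' (f ` T)" "q \<in> perpset P' L' (f ` T)" "p \<noteq> q"
  shows "collinear (bigP P L P' L' f) (bigL P L P' L' f) (BM a p) (BM b q)"
proof -
  obtain c where c: "T = {a, b, c}" "c \<noteq> a" "c \<noteq> b"
    using card_3_obtain_third[OF T(2) ab] .
  obtain r where r: "perpset P' L' (f ` T) = {p, q, r}" "r \<noteq> p" "r \<noteq> q"
    using card_3_obtain_third[OF T' pq] .
  define B where "B = {(a, p), (b, q), (c, r)}"
  have "fst ` B = T"
    unfolding B_def c(1) by simp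
  moreover have "snd ` B = perpset P' L' (f ` T)"
    unfolding B_def r(1) by simp
  moreover have "B \<subseteq> calP P P' L' f"
    using T(1) r(1) c(1) unfolding B_def calP_def perpset_def by auto
  moreover have "card B = 3"
    unfolding B_def using ab(3) c(2,3) by auto
  ultimately have "B \<in> calL P L P' L' f"
    using T T' unfolding calL_def line_or_complete_triad_def by auto
  then have "(\<lambda>(x, y). BM x y) ` B \<in> bigL P L P' L' f"
    unfolding bigL_def by blast
  moreover have "(\<lambda>(x, y). BM x y) ` B = {BM a p, BM b q, BM c r}"
    unfolding B_def by simp
  ultimately have "{BM a p, BM b q, BM c r} \<in> bigL P L P' L' f"
    by simp
  then show ?thesis
    by (rule collinearI) simp_all
qed

locale gq22_iso = gq22 P L for P :: "'a set" and L :: "'a set set" +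
  fixes P' :: "'b set" and L' :: "'b set set" and f :: "'a \<Rightarrow> 'b"
  assumes iso: "geom_iso f P L P' L'"
begin

abbreviation bcol :: "('a, 'b) bpt \<Rightarrow> ('a, 'b) bpt \<Rightarrow> bool" where
  "bcol \<equiv> collinear (bigP P L P' L' f) (bigL P L P' L' f)"

lemma inj_on_f: "inj_on f P" and image_f: "f ` P = P'"
  using iso unfolding geom_iso_def bij_betw_def by auto

lemma perpset_image_f: "T \<subseteq> P \<Longrightarrow> perpset P' L' (f ` T) = f ` perpset P L T"
  using perpset_image[OF iso] line_subset by blast

lemma perp_image_f: "a \<in> P \<Longrightarrow> b \<in> P \<Longrightarrow> f b \<in> perp P' L' (f a) \<longleftrightarrow> b \<in> perp P L a"
  using perp_image_iff[OF iso] line_subset by blast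

lemma card_perpset_image:
  assumes "line_or_complete_triad P L T"
  shows "card (perpset P' L' (f ` T)) = 3"
proof -
  have "perpset P L T \<subseteq> P"
    by (rule perpset_subset)
  then have "card (f ` perpset P L T) = card (perpset P L T)"
    using inj_on_f by (meson card_image inj_on_subset)
  then show ?thesis
    using line_or_complete_triadD[OF assms] perpset_image_f by simp
qed

lemma collinear_BM_BM:
  assumes T: "line_or_complete_triad P L T"
    and "a \<in> T" "b \<in> T" "a \<noteq> b"
    and "p \<in> perpset P' L' (f ` T)" "q \<in> perpset P' L' (f ` T)" "p \<noteq> q"
  shows "bcol (BM a p) (BM b q)"
  using bigL_collinear_BM_BM[OF line_or_complete_triadD(1,2)[OF T] T card_perpset_image[OF T]] assms(2-)
  by blast

lemma calP_if_in_perpset_image: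
  assumes "a \<in> T" "T \<subseteq> P" "p \<in> perpset P' L' (f ` T)"
  shows "(a, p) \<in> calP P P' L' f"
  using assms unfolding calP_def perpset_def by blast

lemma finite_bigP: "finite (bigP P L P' L' f)"
proof -
  have "finite P'"
    using finite_points image_f by blast
  moreover have "calP P P' L' f \<subseteq> P \<times> P'"
    unfolding calP_def perp_def by blast
  ultimately have "finite (calP P P' L' f)"
    using finite_points finite_subset by blast
  then show ?thesis
    unfolding bigP_def using finite_points \<open>finite P'\<close> by simp
qed

lemma three_le_card_perpset:
  assumes "\<forall>Z\<in>{Z1, Z2, Z3}. bcol X Z \<and> bcol Y Z" "Z1 \<noteq> Z2" "Z1 \<noteq> Z3" "Z2 \<noteq> Z3"
  shows "3 \<le> card (perpset (bigP P L P' L' f) (bigL P L P' L' f) {X, Y})"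
proof -
  have "\<forall>l\<in>bigL P L P' L' f. l \<subseteq> bigP P L P' L' f"
    using bigL_subset_bigP by blast
  then have "card {Z1, Z2, Z3} \<le> card (perpset (bigP P L P' L' f) (bigL P L P' L' f) {X, Y})"
    by (rule card_le_card_perpset_pair[OF finite_bigP _ assms(1)])
  then show ?thesis
    using assms(2-4) by simp
qed

lemma three_le_card_perpset_BP_BM:
  assumes x: "x \<in> P" and yv: "(y, v) \<in> calP P P' L' f" and "x \<noteq> y" and vx: "v \<in> perp P' L' (f x)"
  shows "3 \<le> card (perpset (bigP P L P' L' f) (bigL P L P' L' f) {BP x, BM y v})"
proof -
  have y: "y \<in> P" and vy: "v \<in> perp P' L' (f y)"
    using yv unfolding calP_def by blast+
  define T where "T = perpset P L (perpset P L {x, y})"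
  have T: "line_or_complete_triad P L T"
    unfolding T_def using perpset_pair_line_or_complete_triad[OF x y \<open>x \<noteq> y\<close>] by blast
  have "x \<in> T" "y \<in> T"
    unfolding T_def using subset_perpset_perpset[of "{x, y}" P L] x y by blast+
  have "perpset P' L' (f ` T) = f ` perpset P L {x, y}"
    unfolding T_def perpset_image_f[OF perpset_subset]
    using perpset_perpset_perpset[of "{x, y}" P L] x y by simp
  also have "\<dots> = perpset P' L' {f x, f y}"
    using perpset_image_f[of "{x, y}"] x y by simp
  finally have "perpset P' L' (f ` T) = perpset P' L' {f x, f y}" .
  moreover have "v \<in> perpset P' L' {f x, f y}"
    using vx vy unfolding perpset_def perp_def by blast
  ultimately have v_T: "v \<in> perpset P' L' (f ` T)"
    by simp
  then obtain v2 v3 where v: "perpset P' L' (f ` T) = {v, v2, v3}" "v \<noteq> v2" "v \<noteq> v3" "v2 \<noteq> v3"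
    using card_3_obtain_others[OF card_perpset_image[OF T] v_T] by blast
  then have "v2 \<in> perpset P' L' (f ` T)" "v3 \<in> perpset P' L' (f ` T)"
    by blast+
  then have "bcol (BP x) (BM x w) \<and> bcol (BM y v) (BM x w)" if "w \<in> {v2, v3}" for w
    using that short_line_collinear(1)[OF calP_if_in_perpset_image[OF \<open>x \<in> T\<close> line_or_complete_triadD(1)[OF T]]]
      collinear_BM_BM[OF T \<open>y \<in> T\<close> \<open>x \<in> T\<close> \<open>x \<noteq> y\<close>[symmetric] v_T] v(2,3) by blast
  moreover have "bcol (BP x) (BQ v)" "bcol (BM y v) (BQ v)"
    using short_line_collinear(2)[of x v] short_line_collinear(3)[OF yv] x vx unfolding calP_def by blast+
  ultimately show ?thesis
    using three_le_card_perpset[of "BQ v" "BM x v2" "BM x v3"] v(4) by simp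
qed

lemma three_le_card_perpset_BQ_BM:
  assumes u: "u \<in> P'" and yv: "(y, v) \<in> calP P P' L' f" and "u \<noteq> v"
    and yu: "y \<in> perp P L (inv_into P f u)"
  shows "3 \<le> card (perpset (bigP P L P' L' f) (bigL P L P' L' f) {BQ u, BM y v})"
proof -
  have y: "y \<in> P" and vy: "v \<in> perp P' L' (f y)"
    using yv unfolding calP_def by blast+
  then have "v \<in> P'"
    unfolding perp_def by blast
  define u0 w0 where "u0 = inv_into P f u" and "w0 = inv_into P f v"
  have u0: "u0 \<in> P" "f u0 = u" and w0: "w0 \<in> P" "f w0 = v"
    unfolding u0_def w0_def using u \<open>v \<in> P'\<close> image_f by (auto intro: inv_into_into f_inv_into_f)
  then have "u0 \<noteq> w0"
    using \<open>u \<noteq> v\<close> by blast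
  define T where "T = perpset P L {u0, w0}"
  have T: "line_or_complete_triad P L T"
    unfolding T_def using perpset_pair_line_or_complete_triad[OF u0(1) w0(1) \<open>u0 \<noteq> w0\<close>] by blast
  have "w0 \<in> perp P L y"
    using perp_image_f[OF y w0(1)] vy w0(2) by simp
  then have "y \<in> perp P L w0"
    using perp_commute[OF _ y] by blast
  then have "y \<in> T"
    unfolding T_def perpset_def using y yu u0_def by blast
  have "perpset P' L' (f ` T) = f ` perpset P L T"
    unfolding T_def by (rule perpset_image_f[OF perpset_subset])
  then have u_T: "u \<in> perpset P' L' (f ` T)" and v_T: "v \<in> perpset P' L' (f ` T)"
    using subset_perpset_perpset[of "{u0, w0}" P L] u0 w0 unfolding T_def by blast+
  obtain z1 z2 where z: "T = {y, z1, z2}" "y \<noteq> z1" "y \<noteq> z2" "z1 \<noteq> z2"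
    using card_3_obtain_others[OF line_or_complete_triadD(2)[OF T] \<open>y \<in> T\<close>] by blast
  have "bcol (BQ u) (BM z u) \<and> bcol (BM y v) (BM z u)" if "z \<in> {z1, z2}" for z
  proof
    have "z \<in> T" "z \<noteq> y"
      using that z by blast+
    then show "bcol (BQ u) (BM z u)"
      using collinear_sym[OF short_line_collinear(3)[OF calP_if_in_perpset_image[OF \<open>z \<in> T\<close> _ u_T]]]
        line_or_complete_triadD(1)[OF T] by blast
    show "bcol (BM y v) (BM z u)"
      by (rule collinear_BM_BM[OF T \<open>y \<in> T\<close> \<open>z \<in> T\<close> \<open>z \<noteq> y\<close>[symmetric] v_T u_T \<open>u \<noteq> v\<close>[symmetric]])
  qed
  moreover have "bcol (BQ u) (BP y)" "bcol (BM y v) (BP y)"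
    using collinear_sym[OF short_line_collinear(2)[OF calP_if_in_perpset_image[OF \<open>y \<in> T\<close> _ u_T]]]
      collinear_sym[OF short_line_collinear(1)[OF yv]] line_or_complete_triadD(1)[OF T] by blast+
  ultimately show ?thesis
    using three_le_card_perpset[of "BP y" "BM z1 u" "BM z2 u"] z(4) by simp
qed

end

theorem lemma4p3:
  fixes P :: "'a set" and L :: "'a set set" and P' :: "'b set" and L' :: "'b set set"
    and f :: "'a \<Rightarrow> 'b"
  assumes "GQ22 P L" and "GQ22 P' L'" and "geom_iso f P L P' L'"
  shows "(\<forall>x y v. x \<in> P \<and> (y, v) \<in> calP P P' L' f \<and> x \<noteq> y \<and> v \<in> perp P' L' (f x) \<longrightarrow>
            card (perpset (bigP P L P' L' f) (bigL P L P' L' f) {BP x, BM y v}) \<ge> 3)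
       \<and> (\<forall>u y v. u \<in> P' \<and> (y, v) \<in> calP P P' L' f \<and> u \<noteq> v \<and>
                  y \<in> perp P L (inv_into P f u) \<longrightarrow>
            card (perpset (bigP P L P' L' f) (bigL P L P' L' f) {BQ u, BM y v}) \<ge> 3)"
proof -
  interpret gq22_iso P L P' L' f
    using assms(1,3) by (simp add: gq22_iso_def gq22_def gq22_iso_axioms_def)
  show ?thesis
    using three_le_card_perpset_BP_BM three_le_card_perpset_BQ_BM by blast
qed

end
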